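(* Let $\omega\ge 3$ be an integer, let $\varepsilon>0$ and $c>0$ be real constants, and let $k\ge 1$. Let $G$ be a graph with $m$ edges, clique number $\omega(G)=\omega$, and $t(G)\le c\,m^{1.5-\varepsilon}$. If $m\ge \big(2.2\,c\,\omega^{2k}\big)^{1/\varepsilon}$, then \[\Lambda_\ell(G) < 2\left(\frac{\sqrt[3]{\omega}}{1+\sqrt[3]{\omega}}+\frac{1}{\omega^{k}}\right),\] where $\ell=\min\{n^+,\omega\}$.
   Context: For a simple graph $G$ on $n$ vertices and $m$ edges, let $\lambda_1\ge\lambda_2\ge\cdots\ge\lambda_n$ be the eigenvalues of its adjacency matrix $A(G)$. The inertia $(n^+,n^0,n^-)$ means $G$ has $n^+$ positive eigenvalues, eigenvalue $0$ with multiplicity $n^0$, and $n^-$ negative eigenvalues. $\omega(G)$ is the clique number and $t(G)$ the number of triangles of $G$. Define $s_k(G)=\sum_{i=1}^k\lambda_i^2$ and $\Lambda_k(G)=s_k(G)/m$. *)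

theory Defs
  imports "Jordan_Normal_Form.Char_Poly" "HOL-Computational_Algebra.Polynomial" "HOL-Library.Multiset"
begin

text \<open>A simple graph on the vertex set {0..<n}, given by an adjacency predicate E
  that is symmetric and irreflexive on the vertices (values of E outside the
  vertex set are irrelevant).\<close>

definition simple_graph :: "nat \<Rightarrow> (nat \<Rightarrow> nat \<Rightarrow> bool) \<Rightarrow> bool" where
  "simple_graph n E \<longleftrightarrow>
     (\<forall>i<n. \<forall>j<n. E i j = E j i) \<and> (\<forall>i<n. \<not> E i i)"

definition graph_edges :: "nat \<Rightarrow> (nat \<Rightarrow> nat \<Rightarrow> bool) \<Rightarrow> nat set set" where
  "graph_edges n E = {{i, j} | i j. i < n \<and> j < n \<and> E i j}"

definition num_edges :: "nat \<Rightarrow> (nat \<Rightarrow> nat \<Rightarrow> bool) \<Rightarrow> nat" where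
  "num_edges n E = card (graph_edges n E)"

definition adj_mat :: "nat \<Rightarrow> (nat \<Rightarrow> nat \<Rightarrow> bool) \<Rightarrow> real mat" where
  "adj_mat n E = mat n n (\<lambda>(i, j). if E i j then 1 else 0)"

text \<open>Adjacency eigenvalues with multiplicity, in non-increasing order:
  the list [lambda_1, ..., lambda_n] (index i of the list is lambda_(i+1)).
  For a real symmetric matrix the characteristic polynomial splits over the reals.\<close>
definition adj_eigs :: "nat \<Rightarrow> (nat \<Rightarrow> nat \<Rightarrow> bool) \<Rightarrow> real list" where
  "adj_eigs n E = rev (sorted_list_of_multiset (proots (char_poly (adj_mat n E))))"

definition n_pos :: "nat \<Rightarrow> (nat \<Rightarrow> nat \<Rightarrow> bool) \<Rightarrow> nat" where
  "n_pos n E = length (filter (\<lambda>x. x > 0) (adj_eigs n E))"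

definition is_clique :: "nat \<Rightarrow> (nat \<Rightarrow> nat \<Rightarrow> bool) \<Rightarrow> nat set \<Rightarrow> bool" where
  "is_clique n E S \<longleftrightarrow> S \<subseteq> {0..<n} \<and> (\<forall>i\<in>S. \<forall>j\<in>S. i \<noteq> j \<longrightarrow> E i j)"

definition clique_number :: "nat \<Rightarrow> (nat \<Rightarrow> nat \<Rightarrow> bool) \<Rightarrow> nat" where
  "clique_number n E = Max {card S | S. is_clique n E S}"

definition num_triangles :: "nat \<Rightarrow> (nat \<Rightarrow> nat \<Rightarrow> bool) \<Rightarrow> nat" where
  "num_triangles n E = card {S. is_clique n E S \<and> card S = 3}"

definition s_sum :: "nat \<Rightarrow> (nat \<Rightarrow> nat \<Rightarrow> bool) \<Rightarrow> nat \<Rightarrow> real" where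
  "s_sum n E k = (\<Sum>i<k. (adj_eigs n E ! i)^2)"

definition Lambda :: "nat \<Rightarrow> (nat \<Rightarrow> nat \<Rightarrow> bool) \<Rightarrow> nat \<Rightarrow> real" where
  "Lambda n E k = s_sum n E k / real (num_edges n E)"

end

theory Submission
  imports Defs "Jordan_Normal_Form.Schur_Decomposition"
begin

text \<open>Let X = s_l(G) and let N be the sum of the squares of the negative eigenvalues, so that
  X + N \<le> tr A^2 \<le> 2m. As lambda_1, ..., lambda_l are positive, the power-mean inequality gives
  X^(3/2) \<le> sqrt l * (lambda_1^3 + ... + lambda_l^3); the other positive eigenvalues only enlarge
  the cube sum and the negative ones lower it by at most N^(3/2), so tr A^3 \<le> 6t yields
  X^(3/2) \<le> sqrt \<omega> * (6t + N^(3/2)).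
  Put a = cbrt \<omega> / (1 + cbrt \<omega>), chosen so that sqrt \<omega> * (1 - a)^(3/2) = a^(3/2), and
  h = \<omega>^-k. If X \<ge> 2m(a + h) then N \<le> 2m(1 - a), and the two estimates leave
  (a + h)^(3/2) - a^(3/2) \<le> sqrt \<omega> * 6t / (2m)^(3/2). The hypotheses on t and m bound the right
  side by (6/4.4) sqrt(\<omega>/2) h^2, whereas the left side is at least h sqrt a \<ge> h / sqrt 2; this is
  impossible because sqrt \<omega> * h \<le> 1 / sqrt \<omega> and \<omega> \<ge> 3.\<close>

section \<open>Traces and eigenvalues\<close>

definition mat_trace :: "'a::comm_ring_1 mat \<Rightarrow> 'a" where
  "mat_trace A = (\<Sum>i<dim_row A. A $$ (i, i))"

lemma index_mult_mat_sum:
  assumes "A \<in> carrier_mat n m" "B \<in> carrier_mat m p" "i < n" "j < p"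
  shows "(A * B) $$ (i, j) = (\<Sum>l<m. A $$ (i, l) * B $$ (l, j))"
  using assms by (auto simp: scalar_prod_def lessThan_atLeast0 intro: sum.cong)

lemma mat_trace_mult:
  assumes A: "A \<in> carrier_mat n m" and B: "B \<in> carrier_mat m n"
  shows "mat_trace (A * B) = (\<Sum>i<n. \<Sum>j<m. A $$ (i, j) * B $$ (j, i))"
  unfolding mat_trace_def using A by (auto intro: sum.cong index_mult_mat_sum[OF A B])

lemma mat_trace_mult_comm:
  assumes A: "A \<in> carrier_mat n m" and B: "B \<in> carrier_mat m n"
  shows "mat_trace (A * B) = mat_trace (B * A)"
  unfolding mat_trace_mult[OF A B] mat_trace_mult[OF B A]
  by (subst sum.swap) (simp add: mult.commute)

lemma mat_trace_pow2:
  assumes A: "A \<in> carrier_mat n n"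
  shows "mat_trace (A ^\<^sub>m 2) = (\<Sum>i<n. \<Sum>j<n. A $$ (i, j) * A $$ (j, i))"
proof -
  have "A ^\<^sub>m 2 = A * A" using A by (simp add: numeral_2_eq_2)
  then show ?thesis by (simp add: mat_trace_mult[OF A A])
qed

lemma mat_trace_pow3:
  assumes A: "A \<in> carrier_mat n n"
  shows "mat_trace (A ^\<^sub>m 3) = (\<Sum>i<n. \<Sum>j<n. \<Sum>l<n. A $$ (i, j) * A $$ (j, l) * A $$ (l, i))"
proof -
  have AA: "A * A \<in> carrier_mat n n" using A by simp
  have "A ^\<^sub>m 3 = A * A * A" using A by (simp add: numeral_3_eq_3)
  then have "mat_trace (A ^\<^sub>m 3) = (\<Sum>i<n. \<Sum>l<n. (A * A) $$ (i, l) * A $$ (l, i))"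
    by (simp add: mat_trace_mult[OF AA A])
  also have "\<dots> = (\<Sum>i<n. \<Sum>l<n. (\<Sum>j<n. A $$ (i, j) * A $$ (j, l)) * A $$ (l, i))"
    by (intro sum.cong refl) (simp add: index_mult_mat_sum[OF A A] del: index_mult_mat)
  also have "\<dots> = (\<Sum>i<n. \<Sum>j<n. \<Sum>l<n. A $$ (i, j) * A $$ (j, l) * A $$ (l, i))"
    by (simp add: sum_distrib_right) (intro sum.cong refl sum.swap)
  finally show ?thesis .
qed

lemma upper_triangular_mult:
  assumes A: "A \<in> carrier_mat n n" and B: "B \<in> carrier_mat n n"
    and utA: "upper_triangular A" and utB: "upper_triangular B"
  shows "upper_triangular (A * B)"
    and "\<And>i. i < n \<Longrightarrow> (A * B) $$ (i, i) = A $$ (i, i) * B $$ (i, i)"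
proof -
  have zero: "A $$ (i, l) * B $$ (l, j) = 0" if "i < n" "l < n" "l \<noteq> i \<or> l \<noteq> j" "j \<le> i" for i j l
  proof (cases "l < i")
    case True
    then show ?thesis using upper_triangularD[OF utA] A that by simp
  next
    case False
    then have "j < l" using that by auto
    then show ?thesis using upper_triangularD[OF utB] B that by simp
  qed
  show "upper_triangular (A * B)"
  proof
    fix i j assume "i < dim_row (A * B)" "j < i"
    then have "i < n" using A by simp
    then show "(A * B) $$ (i, j) = 0"
      using \<open>j < i\<close> zero by (simp add: index_mult_mat_sum[OF A B] sum.neutral)
  qed
  show "(A * B) $$ (i, i) = A $$ (i, i) * B $$ (i, i)" if i: "i < n" for i
  proof -
    have "(A * B) $$ (i, i) = (\<Sum>l<n. A $$ (i, l) * B $$ (l, i))"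
      by (rule index_mult_mat_sum[OF A B i i])
    also have "\<dots> = A $$ (i, i) * B $$ (i, i)"
      using i zero[of i _ i] by (subst sum.remove[of _ i]) (auto intro: sum.neutral)
    finally show ?thesis .
  qed
qed

lemma upper_triangular_pow:
  assumes A: "A \<in> carrier_mat n n" and ut: "upper_triangular A"
  shows "upper_triangular (A ^\<^sub>m k) \<and> (\<forall>i<n. (A ^\<^sub>m k) $$ (i, i) = A $$ (i, i) ^ k)"
proof (induction k)
  case (Suc k)
  have "A ^\<^sub>m k \<in> carrier_mat n n" using A by simp
  then show ?case
    using Suc upper_triangular_mult[OF _ A _ ut, of "A ^\<^sub>m k"] by (auto simp: power_commutes)
qed (use A in auto)

lemma mat_trace_pow_char_poly_roots:
  fixes A :: "'a::conjugatable_ordered_field mat"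
  assumes A: "A \<in> carrier_mat n n" and split: "char_poly A = (\<Prod>a\<leftarrow>es. [:-a, 1:])"
  shows "mat_trace (A ^\<^sub>m k) = (\<Sum>e\<leftarrow>es. e ^ k)"
proof -
  obtain B P Q where schur: "schur_decomposition A es = (B, P, Q)"
    by (cases "schur_decomposition A es") auto
  from schur_decomposition[OF A split schur]
  have sim: "similar_mat_wit A B P Q" and ut: "upper_triangular B" and diag: "diag_mat B = es"
    by auto
  from sim A have B: "B \<in> carrier_mat n n" and P: "P \<in> carrier_mat n n"
    and Q: "Q \<in> carrier_mat n n" and QP: "Q * P = 1\<^sub>m n"
    unfolding similar_mat_wit_def Let_def by auto
  have Bk: "B ^\<^sub>m k \<in> carrier_mat n n" using B by simp
  have "mat_trace (A ^\<^sub>m k) = mat_trace (P * (B ^\<^sub>m k * Q))"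
    using similar_mat_wit_pow_id[OF sim] P Bk Q by (simp add: assoc_mult_mat[of _ n n _ n _ n])
  also have "\<dots> = mat_trace (B ^\<^sub>m k * (Q * P))"
    using mat_trace_mult_comm[of P n n "B ^\<^sub>m k * Q"] P Bk Q
    by (simp add: assoc_mult_mat[of _ n n _ n _ n])
  also have "\<dots> = (\<Sum>i<n. B $$ (i, i) ^ k)"
    using QP Bk B upper_triangular_pow[OF B ut, of k] by (simp add: mat_trace_def)
  also have "\<dots> = (\<Sum>e\<leftarrow>es. e ^ k)"
  proof -
    have "es = map (\<lambda>i. B $$ (i, i)) [0..<n]" using diag B by (simp add: diag_mat_def)
    then show ?thesis by (simp add: sum_list_distinct_conv_sum_set lessThan_atLeast0 o_def)
  qed
  finally show ?thesis .
qed

lemma Im_eigenvalue_real_symmetric: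
  fixes A :: "real mat"
  assumes A: "A \<in> carrier_mat n n" and sym: "\<And>i j. i < n \<Longrightarrow> j < n \<Longrightarrow> A $$ (i, j) = A $$ (j, i)"
    and ev: "eigenvalue (map_mat complex_of_real A) \<mu>"
  shows "Im \<mu> = 0"
proof -
  let ?a = "\<lambda>i j. complex_of_real (A $$ (i, j))"
  obtain v where v: "v \<in> carrier_vec n" "v \<noteq> 0\<^sub>v n" "map_mat complex_of_real A *\<^sub>v v = \<mu> \<cdot>\<^sub>v v"
    using ev A unfolding eigenvalue_def eigenvector_def by auto
  have Av: "(\<Sum>j<n. ?a i j * v $ j) = \<mu> * v $ i" if "i < n" for i
  proof -
    have "(\<Sum>j<n. ?a i j * v $ j) = (map_mat complex_of_real A *\<^sub>v v) $ i"
      using that A v(1) by (simp add: scalar_prod_def lessThan_atLeast0)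
    also have "\<dots> = \<mu> * v $ i" using v that by simp
    finally show ?thesis .
  qed
  define S where "S = (\<Sum>i<n. \<Sum>j<n. cnj (v $ i) * ?a i j * v $ j)"
  define r where "r = (\<Sum>i<n. (cmod (v $ i))\<^sup>2)"
  have "S = (\<Sum>i<n. cnj (v $ i) * (\<Sum>j<n. ?a i j * v $ j))"
    unfolding S_def by (simp add: sum_distrib_left mult.assoc)
  also have "\<dots> = (\<Sum>i<n. cnj (v $ i) * (\<mu> * v $ i))"
    by (simp add: Av)
  also have "\<dots> = \<mu> * (\<Sum>i<n. cnj (v $ i) * v $ i)"
    by (simp add: sum_distrib_left ac_simps)
  also have "\<dots> = \<mu> * complex_of_real r"
    unfolding r_def by (simp add: complex_mult_cnj cmod_def mult.commute)
  finally have S_eq: "S = \<mu> * complex_of_real r" .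
  have "cnj S = (\<Sum>i<n. \<Sum>j<n. v $ i * ?a i j * cnj (v $ j))"
    unfolding S_def by simp
  also have "\<dots> = (\<Sum>j<n. \<Sum>i<n. v $ i * ?a i j * cnj (v $ j))"
    by (rule sum.swap)
  also have "\<dots> = S"
    unfolding S_def by (intro sum.cong refl) (simp add: sym ac_simps)
  finally have "Im (cnj S) = Im S" by simp
  then have "Im S = 0" by simp
  moreover have "r > 0"
  proof -
    obtain i where "i < n" "v $ i \<noteq> 0" using v by (metis carrier_vecD eq_vecI index_zero_vec(1,2))
    then have "0 < (cmod (v $ i))\<^sup>2" by simp
    also have "\<dots> \<le> r" unfolding r_def using \<open>i < n\<close> by (intro member_le_sum) auto
    finally show ?thesis .
  qed
  ultimately show ?thesis using S_eq by simp
qed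

lemma char_poly_real_symmetric_splits:
  fixes A :: "real mat"
  assumes A: "A \<in> carrier_mat n n" and sym: "\<And>i j. i < n \<Longrightarrow> j < n \<Longrightarrow> A $$ (i, j) = A $$ (j, i)"
  obtains es where "char_poly A = (\<Prod>a\<leftarrow>es. [:-a, 1:])" and "length es = n"
proof -
  let ?B = "map_mat complex_of_real A"
  have B: "?B \<in> carrier_mat n n" using A by simp
  obtain as where as: "char_poly ?B = (\<Prod>a\<leftarrow>as. [:-a, 1:])" "length as = n"
    using char_poly_factorized[OF B] by blast
  have real: "of_real (Re a) = a" if "a \<in> set as" for a
  proof -
    have "poly (char_poly ?B) a = 0"
      unfolding as(1) using that by (simp add: poly_prod_list)
    then have "Im a = 0"
      using Im_eigenvalue_real_symmetric[OF A sym] eigenvalue_root_char_poly[OF B] by blast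
    then show ?thesis by (simp add: complex_eq_iff)
  qed
  define es where "es = map Re as"
  interpret map_poly_comm_ring_hom complex_of_real ..
  have "map_poly complex_of_real (\<Prod>a\<leftarrow>es. [:-a, 1:]) = (\<Prod>a\<leftarrow>es. [:-complex_of_real a, 1:])"
    by (induction es) (simp_all only: list.map prod_list.Cons prod_list.Nil hom_mult hom_one, simp)
  also have "\<dots> = char_poly ?B"
    unfolding as(1) es_def by (simp add: o_def real cong: map_cong)
  also have "\<dots> = map_poly complex_of_real (char_poly A)"
    by (rule of_real_hom.char_poly_hom[OF A])
  finally have "char_poly A = (\<Prod>a\<leftarrow>es. [:-a, 1:])"
    by (simp add: poly_eq_iff)
  moreover have "length es = n" using as(2) by (simp add: es_def)
  ultimately show ?thesis by (rule that)
qed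

section \<open>Elementary inequalities\<close>

lemma cube_amgm:
  fixes x s :: real
  assumes "0 \<le> x" "0 \<le> s"
  shows "3 * x\<^sup>2 * s \<le> 2 * x ^ 3 + s ^ 3"
proof -
  have "2 * x ^ 3 + s ^ 3 - 3 * x\<^sup>2 * s = (x - s)\<^sup>2 * (2 * x + s)"
    by (simp add: algebra_simps power2_eq_square power3_eq_cube)
  also have "\<dots> \<ge> 0" using assms by simp
  finally show ?thesis by simp
qed

lemma sum_squares_three_halves_le:
  fixes f :: "nat \<Rightarrow> real"
  assumes nonneg: "\<And>i. i < l \<Longrightarrow> 0 \<le> f i"
  shows "(\<Sum>i<l. (f i)\<^sup>2) * sqrt (\<Sum>i<l. (f i)\<^sup>2) \<le> sqrt l * (\<Sum>i<l. f i ^ 3)"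
proof (cases "l = 0")
  case False
  define X where "X = (\<Sum>i<l. (f i)\<^sup>2)"
  define C where "C = (\<Sum>i<l. f i ^ 3)"
  \<comment> \<open>AM-GM against the quadratic mean s\<close>
  define s where "s = sqrt (X / l)"
  have "X \<ge> 0" unfolding X_def by (intro sum_nonneg) auto
  then have s: "0 \<le> s" "s\<^sup>2 = X / l" unfolding s_def by simp_all
  have "3 * s * X = (\<Sum>i<l. 3 * (f i)\<^sup>2 * s)"
    unfolding X_def by (simp add: sum_distrib_left sum_distrib_right ac_simps)
  also have "\<dots> \<le> (\<Sum>i<l. 2 * f i ^ 3 + s ^ 3)"
    using nonneg s(1) by (intro sum_mono cube_amgm) auto
  also have "\<dots> = 2 * C + s * X"
    using s(2) False by (simp add: C_def sum.distrib sum_distrib_left power3_eq_cube power2_eq_square field_simps)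
  finally have "s * X \<le> C" by linarith
  moreover have "s = sqrt X / sqrt l" unfolding s_def by (simp add: real_sqrt_divide)
  ultimately show ?thesis
    using False by (simp add: X_def C_def field_simps mult.commute)
qed simp

lemma sum_prefix_cubes_le:
  fixes f :: "nat \<Rightarrow> real"
  assumes "l \<le> n" and nonneg: "\<And>i. i < l \<Longrightarrow> 0 \<le> f i"
  obtains N where "0 \<le> N" and "(\<Sum>i<l. (f i)\<^sup>2) + N \<le> (\<Sum>i<n. (f i)\<^sup>2)"
    and "(\<Sum>i<l. f i ^ 3) \<le> (\<Sum>i<n. f i ^ 3) + N * sqrt N"
proof
  define P where "P = {i. i < n \<and> 0 \<le> f i}"
  define Q where "Q = {i. i < n \<and> f i < 0}"
  define N where "N = (\<Sum>i\<in>Q. (f i)\<^sup>2)"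
  have fin: "finite P" "finite Q" unfolding P_def Q_def by auto
  have split: "{..<n} = P \<union> Q" "P \<inter> Q = {}" unfolding P_def Q_def by auto
  have lP: "{..<l} \<subseteq> P" unfolding P_def using \<open>l \<le> n\<close> nonneg by auto
  show "0 \<le> N" unfolding N_def by (intro sum_nonneg) auto
  have "(\<Sum>i<l. (f i)\<^sup>2) \<le> (\<Sum>i\<in>P. (f i)\<^sup>2)"
    using fin lP by (intro sum_mono2) auto
  then show "(\<Sum>i<l. (f i)\<^sup>2) + N \<le> (\<Sum>i<n. (f i)\<^sup>2)"
    unfolding N_def split(1) using fin split(2) by (simp add: sum.union_disjoint)
  have "- (\<Sum>i\<in>Q. f i ^ 3) = (\<Sum>i\<in>Q. \<bar>f i\<bar> * (f i)\<^sup>2)"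
    unfolding sum_negf[symmetric] by (rule sum.cong) (auto simp: Q_def power3_eq_cube power2_eq_square)
  also have "\<dots> \<le> (\<Sum>i\<in>Q. sqrt N * (f i)\<^sup>2)"
  proof (rule sum_mono)
    fix i assume "i \<in> Q"
    then have "(f i)\<^sup>2 \<le> N" unfolding N_def using fin by (intro member_le_sum) auto
    then have "\<bar>f i\<bar> \<le> sqrt N" using real_sqrt_le_mono by fastforce
    then show "\<bar>f i\<bar> * (f i)\<^sup>2 \<le> sqrt N * (f i)\<^sup>2" by (intro mult_right_mono) auto
  qed
  also have "\<dots> = N * sqrt N" unfolding N_def by (simp add: sum_distrib_right mult.commute)
  finally have "- (\<Sum>i\<in>Q. f i ^ 3) \<le> N * sqrt N" .
  moreover have "(\<Sum>i<l. f i ^ 3) \<le> (\<Sum>i\<in>P. f i ^ 3)"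
    using fin lP by (intro sum_mono2) (auto simp: P_def)
  ultimately show "(\<Sum>i<l. f i ^ 3) \<le> (\<Sum>i<n. f i ^ 3) + N * sqrt N"
    unfolding split(1) using fin split(2) by (simp add: sum.union_disjoint)
qed

lemma cube_root_fraction_balance:
  fixes w :: real
  assumes "0 \<le> w"
  defines "a \<equiv> root 3 w / (1 + root 3 w)"
  shows "sqrt w * ((1 - a) * sqrt (1 - a)) = a * sqrt a"
proof -
  define r where "r = root 3 w"
  define p where "p = 1 / (1 + r)"
  have r: "0 \<le> r" "r ^ 3 = w" unfolding r_def using assms by simp_all
  have a: "1 - a = p" "a = r * p"
    unfolding a_def p_def r_def[symmetric] using r by (simp_all add: field_simps)
  have "sqrt w = r * sqrt r"
    using r by (simp add: power3_eq_cube real_sqrt_mult flip: r(2))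
  then have "sqrt w * ((1 - a) * sqrt (1 - a)) = (r * sqrt r) * (p * sqrt p)"
    by (simp add: a(1))
  also have "\<dots> = (r * p) * sqrt (r * p)"
    by (simp add: real_sqrt_mult ac_simps)
  finally show ?thesis by (simp add: a(2))
qed

lemma three_halves_power_increment:
  fixes a h :: real
  assumes "0 \<le> a" "0 \<le> h"
  shows "a * sqrt a + h * sqrt a \<le> (a + h) * sqrt (a + h)"
proof -
  have "(a + h) * sqrt a \<le> (a + h) * sqrt (a + h)"
    using assms by (intro mult_left_mono) auto
  then show ?thesis by (simp add: algebra_simps)
qed

lemma three_halves_power_le_mult:
  fixes x y z :: real
  assumes "0 \<le> x" "x \<le> y * z" "0 \<le> y" "0 \<le> z"
  shows "x * sqrt x \<le> (y * sqrt y) * (z * sqrt z)"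
proof -
  have "x * sqrt x \<le> (y * z) * sqrt (y * z)"
    using assms by (intro mult_mono) auto
  then show ?thesis by (simp add: real_sqrt_mult ac_simps)
qed

lemma cube_root_fraction_bounds:
  fixes w :: real
  assumes "1 \<le> w"
  shows "1 / 2 \<le> root 3 w / (1 + root 3 w)" and "root 3 w / (1 + root 3 w) \<le> 1"
proof -
  have "1 / 2 \<le> r / (1 + r) \<and> r / (1 + r) \<le> 1" if "1 \<le> r" for r :: real
    using that by (simp add: field_simps)
  moreover have "1 \<le> root 3 w" using assms by simp
  ultimately show "1 / 2 \<le> root 3 w / (1 + root 3 w)" "root 3 w / (1 + root 3 w) \<le> 1"
    by blast+
qed

lemma triangle_term_lt_increment:
  fixes w a h :: real
  assumes w: "3 \<le> w" and a: "1 / 2 \<le> a" and h: "0 < h" "h \<le> 1 / w"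
  shows "(6 / 2.2) * (sqrt w * h) < 2 * (sqrt 2 * sqrt a)"
proof -
  have "sqrt w * h \<le> sqrt w * (1 / w)" using h w by (intro mult_left_mono) auto
  also have "\<dots> = 1 / sqrt w" using w by (simp add: field_simps)
  also have "\<dots> \<le> 1 / sqrt 3" using w by (simp add: frac_le)
  finally have "(6 / 2.2) * (sqrt w * h) \<le> (6 / 2.2) * (1 / sqrt 3)" by simp
  also have "\<dots> < 2"
  proof -
    have "3 / 2.2 < sqrt (3 :: real)" by (rule real_less_rsqrt) (simp add: power2_eq_square)
    then show ?thesis by (simp add: field_simps)
  qed
  also have "\<dots> \<le> 2 * (sqrt 2 * sqrt a)"
    using a by (simp add: real_sqrt_mult[symmetric])
  finally show ?thesis .
qed

lemma ratio_bound_from_cube_sums: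
  fixes X N m T w :: real and k :: nat
  assumes X: "0 \<le> X" and N: "0 \<le> N" and m: "0 < m" and XN: "X + N \<le> 2 * m"
    and cubes: "X * sqrt X \<le> sqrt w * (T + N * sqrt N)"
    and T: "T \<le> (6 / 2.2) * (m * sqrt m) / w ^ (2 * k)"
    and w: "3 \<le> w" and k: "1 \<le> k"
  shows "X / m < 2 * (root 3 w / (1 + root 3 w) + 1 / w ^ k)"
proof (rule ccontr)
  define a where "a = root 3 w / (1 + root 3 w)"
  define h where "h = 1 / w ^ k"
  define M where "M = 2 * m"
  define Q where "Q = m * sqrt m"
  assume "\<not> ?thesis"
  then have XM: "M * (a + h) \<le> X" using m unfolding a_def h_def M_def by (simp add: field_simps)
  have M: "0 < M" "M * sqrt M = 2 * sqrt 2 * Q"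
    unfolding M_def Q_def using m by (simp_all add: real_sqrt_mult)
  have a: "1 / 2 \<le> a" "a \<le> 1" unfolding a_def using w cube_root_fraction_bounds by simp_all
  have "w \<le> w ^ k" using power_increasing[OF k, of w] w by simp
  then have h: "0 < h" "h \<le> 1 / w" unfolding h_def using w by (simp_all add: frac_le)
  have "N \<le> M * (1 - a)"
    using XN XM mult_left_mono[OF _ less_imp_le[OF M(1)], of 0 h] h unfolding M_def
    by (simp add: algebra_simps)
  then have "sqrt w * (N * sqrt N) \<le> sqrt w * ((M * sqrt M) * ((1 - a) * sqrt (1 - a)))"
    using N M(1) a w by (intro mult_left_mono three_halves_power_le_mult) auto
  also have "\<dots> = (M * sqrt M) * (sqrt w * ((1 - a) * sqrt (1 - a)))"
    by (rule mult.left_commute)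
  also have "\<dots> = (M * sqrt M) * (a * sqrt a)"
    unfolding a_def using w by (simp add: cube_root_fraction_balance)
  finally have N_bound: "sqrt w * (N * sqrt N) \<le> (M * sqrt M) * (a * sqrt a)" .
  have "w ^ (2 * k) = (w ^ k)\<^sup>2" by (metis power_mult mult.commute)
  then have T_bound: "sqrt w * T \<le> sqrt w * ((6 / 2.2) * Q * h\<^sup>2)"
    using T w unfolding h_def Q_def by (intro mult_left_mono) (simp_all add: power_one_over)
  have "(M * sqrt M) * (a * sqrt a + h * sqrt a) \<le> (M * sqrt M) * ((a + h) * sqrt (a + h))"
    using M(1) a h by (intro mult_left_mono three_halves_power_increment) auto
  also have "\<dots> = (M * (a + h)) * sqrt (M * (a + h))"
    by (simp add: real_sqrt_mult ac_simps)
  also have "\<dots> \<le> X * sqrt X"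
    using XM M(1) a h X by (intro mult_mono) auto
  finally have "(Q * h) * (2 * (sqrt 2 * sqrt a)) \<le> (Q * h) * ((6 / 2.2) * (sqrt w * h))"
    using cubes N_bound T_bound unfolding M(2) by (simp add: algebra_simps power2_eq_square)
  then have "2 * (sqrt 2 * sqrt a) \<le> (6 / 2.2) * (sqrt w * h)"
    using m h unfolding Q_def by (simp add: mult_le_cancel_left_pos)
  with triangle_term_lt_increment[OF w a(1) h] show False by linarith
qed

lemma le_of_powr_threshold:
  fixes t c m \<epsilon> B :: real
  assumes \<epsilon>: "0 < \<epsilon>" and B: "0 < B" and c: "0 \<le> c"
    and t: "t \<le> c * m powr (1.5 - \<epsilon>)" and m: "B powr (1 / \<epsilon>) \<le> m"
  shows "t \<le> c * (m * sqrt m) / B"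
proof -
  have "0 < m" using m B by (smt (verit) powr_gt_zero)
  have "B = (B powr (1 / \<epsilon>)) powr \<epsilon>" using \<epsilon> B by (simp add: powr_powr)
  also have "\<dots> \<le> m powr \<epsilon>" using m \<epsilon> by (intro powr_mono2) auto
  finally have B_le: "B \<le> m powr \<epsilon>" .
  have "m powr (1.5 - \<epsilon>) = m powr (1 + 1 / 2) / m powr \<epsilon>"
    by (simp add: powr_diff)
  also have "\<dots> = m powr 1 * m powr (1 / 2) / m powr \<epsilon>"
    by (simp only: powr_add)
  also have "\<dots> = (m * sqrt m) / m powr \<epsilon>" using \<open>0 < m\<close> by (simp add: powr_half_sqrt)
  finally have "t \<le> c * ((m * sqrt m) / m powr \<epsilon>)" using t by simp
  also have "\<dots> \<le> c * ((m * sqrt m) / B)"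
    using B B_le \<open>0 < m\<close> c by (intro mult_left_mono divide_left_mono) auto
  finally show ?thesis by simp
qed

section \<open>Spectra of adjacency matrices\<close>

lemma card_le_mult_of_fibres:
  assumes "finite B" and "f ` A \<subseteq> B" and "\<And>b. b \<in> B \<Longrightarrow> card {a \<in> A. f a = b} \<le> k"
  shows "card A \<le> k * card B"
proof -
  have "A = (\<Union>b\<in>B. {a \<in> A. f a = b})" using assms(2) by blast
  then have "card A \<le> (\<Sum>b\<in>B. card {a \<in> A. f a = b})"
    using card_UN_le[OF assms(1)] by metis
  also have "\<dots> \<le> k * card B"
    using sum_bounded_above[of B "\<lambda>b. card {a \<in> A. f a = b}" k] assms(3) by (simp add: mult.commute)
  finally show ?thesis .
qed

lemma card_adjacent_pairs_le:
  "card {(i, j). i < n \<and> j < n \<and> E i j} \<le> 2 * num_edges n E"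
  unfolding num_edges_def
proof (rule card_le_mult_of_fibres[where f = "\<lambda>(i, j). {i, j}"])
  have "graph_edges n E \<subseteq> (\<lambda>(i, j). {i, j}) ` ({..<n} \<times> {..<n})"
    unfolding graph_edges_def by auto
  then show "finite (graph_edges n E)" by (rule finite_subset) auto
  show "(\<lambda>(i, j). {i, j}) ` {(i, j). i < n \<and> j < n \<and> E i j} \<subseteq> graph_edges n E"
    unfolding graph_edges_def by auto
  fix e assume "e \<in> graph_edges n E"
  then obtain x y where e: "e = {x, y}" unfolding graph_edges_def by auto
  have "{p \<in> {(i, j). i < n \<and> j < n \<and> E i j}. (\<lambda>(i, j). {i, j}) p = e} \<subseteq> set [(x, y), (y, x)]"
  proof
    fix p assume "p \<in> {p \<in> {(i, j). i < n \<and> j < n \<and> E i j}. (\<lambda>(i, j). {i, j}) p = e}"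
    then obtain i j where "p = (i, j)" "{i, j} = {x, y}" unfolding e by auto
    then show "p \<in> set [(x, y), (y, x)]" by (auto simp: doubleton_eq_iff)
  qed
  from card_mono[OF _ this] show "card {p \<in> {(i, j). i < n \<and> j < n \<and> E i j}. (\<lambda>(i, j). {i, j}) p = e} \<le> 2"
    using card_length[of "[(x, y), (y, x)]"] by simp
qed

lemma card_triangle_walks_le:
  assumes sg: "simple_graph n E"
  shows "card {(i, j, l). i < n \<and> j < n \<and> l < n \<and> E i j \<and> E j l \<and> E l i}
    \<le> 6 * num_triangles n E"
  unfolding num_triangles_def
proof (rule card_le_mult_of_fibres[where f = "\<lambda>(i, j, l). {i, j, l}"])
  let ?W = "{(i, j, l). i < n \<and> j < n \<and> l < n \<and> E i j \<and> E j l \<and> E l i}"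
  have sym: "\<And>i j. i < n \<Longrightarrow> j < n \<Longrightarrow> E i j = E j i" and irrefl: "\<And>i. i < n \<Longrightarrow> \<not> E i i"
    using sg unfolding simple_graph_def by auto
  have distinct: "i \<noteq> j \<and> j \<noteq> l \<and> i \<noteq> l" if "(i, j, l) \<in> ?W" for i j l
    using that irrefl by auto
  have "{S. is_clique n E S \<and> card S = 3} \<subseteq> Pow {0..<n}" unfolding is_clique_def by auto
  then show "finite {S. is_clique n E S \<and> card S = 3}" by (rule finite_subset) auto
  show "(\<lambda>(i, j, l). {i, j, l}) ` ?W \<subseteq> {S. is_clique n E S \<and> card S = 3}"
  proof
    fix S assume "S \<in> (\<lambda>(i, j, l). {i, j, l}) ` ?W"
    then obtain i j l where ijl: "(i, j, l) \<in> ?W" "S = {i, j, l}" by auto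
    with distinct[OF ijl(1)] sym show "S \<in> {S. is_clique n E S \<and> card S = 3}"
      unfolding is_clique_def by auto
  qed
  fix S assume "S \<in> {S. is_clique n E S \<and> card S = 3}"
  then obtain x y z where S: "S = {x, y, z}" by (auto simp: card_3_iff)
  let ?perms = "[(x, y, z), (x, z, y), (y, x, z), (y, z, x), (z, x, y), (z, y, x)]"
  have "{p \<in> ?W. (\<lambda>(i, j, l). {i, j, l}) p = S} \<subseteq> set ?perms"
  proof
    fix p assume p: "p \<in> {p \<in> ?W. (\<lambda>(i, j, l). {i, j, l}) p = S}"
    then obtain i j l where ijl: "p = (i, j, l)" "(i, j, l) \<in> ?W" "{i, j, l} = {x, y, z}"
      unfolding S by auto
    have "i \<in> {x, y, z}" "j \<in> {x, y, z}" "l \<in> {x, y, z}" "x \<in> {i, j, l}" "y \<in> {i, j, l}" "z \<in> {i, j, l}"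
      using ijl(3) by blast+
    with distinct[OF ijl(2)] show "p \<in> set ?perms" unfolding ijl(1) by auto
  qed
  from card_mono[OF _ this] show "card {p \<in> ?W. (\<lambda>(i, j, l). {i, j, l}) p = S} \<le> 6"
    using card_length[of ?perms] by simp
qed

lemma adj_mat_carrier: "adj_mat n E \<in> carrier_mat n n"
  by (simp add: adj_mat_def)

lemma adj_mat_entry: "i < n \<Longrightarrow> j < n \<Longrightarrow> adj_mat n E $$ (i, j) = of_bool (E i j)"
  by (simp add: adj_mat_def)

lemma mat_trace_adj_mat_sq_le: "mat_trace (adj_mat n E ^\<^sub>m 2) \<le> 2 * real (num_edges n E)"
proof -
  have "mat_trace (adj_mat n E ^\<^sub>m 2) = (\<Sum>i<n. \<Sum>j<n. of_bool (E i j) * of_bool (E j i))"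
    by (simp add: mat_trace_pow2[OF adj_mat_carrier] adj_mat_entry)
  also have "\<dots> \<le> (\<Sum>i<n. \<Sum>j<n. of_bool (E i j))"
    by (intro sum_mono) auto
  also have "\<dots> = (\<Sum>(i, j)\<in>{..<n} \<times> {..<n}. of_bool (E i j))"
    by (rule sum.cartesian_product)
  also have "\<dots> = real (card {(i, j). i < n \<and> j < n \<and> E i j})"
  proof -
    have "{(i, j). i < n \<and> j < n \<and> E i j} = {..<n} \<times> {..<n} \<inter> {p. E (fst p) (snd p)}"
      by auto
    then show ?thesis by (simp add: case_prod_beta)
  qed
  also have "\<dots> \<le> 2 * real (num_edges n E)"
    using card_adjacent_pairs_le[of n E] by linarith
  finally show ?thesis .
qed

lemma mat_trace_adj_mat_cube_le:
  assumes "simple_graph n E"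
  shows "mat_trace (adj_mat n E ^\<^sub>m 3) \<le> 6 * real (num_triangles n E)"
proof -
  let ?W = "{(i, j, l). i < n \<and> j < n \<and> l < n \<and> E i j \<and> E j l \<and> E l i}"
  have "mat_trace (adj_mat n E ^\<^sub>m 3)
      = (\<Sum>i<n. \<Sum>j<n. \<Sum>l<n. of_bool (E i j) * of_bool (E j l) * of_bool (E l i))"
    by (simp add: mat_trace_pow3[OF adj_mat_carrier] adj_mat_entry)
  also have "\<dots> = (\<Sum>(i, j, l)\<in>{..<n} \<times> {..<n} \<times> {..<n}. of_bool (E i j \<and> E j l \<and> E l i))"
    by (simp only: sum.cartesian_product of_bool_conj mult.assoc)
  also have "\<dots> = real (card ?W)"
  proof -
    have "?W = {..<n} \<times> {..<n} \<times> {..<n} \<inter> {p. case p of (i, j, l) \<Rightarrow> E i j \<and> E j l \<and> E l i}"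
      by auto
    then show ?thesis by (simp add: case_prod_beta)
  qed
  also have "\<dots> \<le> 6 * real (num_triangles n E)"
    using card_triangle_walks_le[OF assms] by linarith
  finally show ?thesis .
qed

lemma proots_prod_linear_factors:
  "proots (\<Prod>a\<leftarrow>xs. [:-a, 1:]) = mset (xs :: 'a::idom list)"
proof (induction xs)
  case (Cons a xs)
  have "(\<Prod>a\<leftarrow>xs. [:-a, 1:]) \<noteq> 0" by (auto simp: prod_list_zero_iff)
  then show ?case using Cons by (simp add: proots_mult del: mult_pCons_left)
qed simp

lemma adj_eigs_power_sum:
  assumes sg: "simple_graph n E"
  shows "length (adj_eigs n E) = n"
    and "(\<Sum>i<n. adj_eigs n E ! i ^ k) = mat_trace (adj_mat n E ^\<^sub>m k)"
proof -
  have "adj_mat n E $$ (i, j) = adj_mat n E $$ (j, i)" if "i < n" "j < n" for i j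
    using sg that by (simp add: adj_mat_entry simple_graph_def)
  then obtain es where es: "char_poly (adj_mat n E) = (\<Prod>a\<leftarrow>es. [:-a, 1:])" "length es = n"
    using char_poly_real_symmetric_splits[OF adj_mat_carrier] by blast
  have mset_eigs: "mset (adj_eigs n E) = mset es"
    unfolding adj_eigs_def es(1) by (simp add: proots_prod_linear_factors)
  then show len: "length (adj_eigs n E) = n"
    using es(2) by (metis size_mset)
  have "(\<Sum>i<n. adj_eigs n E ! i ^ k) = (\<Sum>x\<leftarrow>adj_eigs n E. x ^ k)"
    using len by (simp add: sum_list_sum_nth lessThan_atLeast0)
  also have "\<dots> = (\<Sum>x\<leftarrow>es. x ^ k)"
    by (metis mset_eigs mset_map sum_mset_sum_list)
  also have "\<dots> = mat_trace (adj_mat n E ^\<^sub>m k)"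
    using mat_trace_pow_char_poly_roots[OF adj_mat_carrier es(1)] by simp
  finally show "(\<Sum>i<n. adj_eigs n E ! i ^ k) = mat_trace (adj_mat n E ^\<^sub>m k)" .
qed

lemma sorted_desc_nth_pos:
  fixes xs :: "'a :: {linorder, zero} list"
  assumes "sorted_wrt (\<ge>) xs" and "i < length (filter (\<lambda>x. 0 < x) xs)"
  shows "0 < xs ! i"
  using assms
proof (induction xs arbitrary: i)
  case (Cons x xs)
  show ?case
  proof (cases "0 < x")
    case True
    with Cons show ?thesis by (cases i) auto
  next
    case False
    with Cons.prems(1) have "filter (\<lambda>x. 0 < x) (x # xs) = []"
      by (auto simp: filter_empty_conv intro: le_less_trans)
    with Cons.prems(2) show ?thesis by simp
  qed
qed simp

lemma top_eigenvalues_cube_bound: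
  assumes sg: "simple_graph n E" and l: "l \<le> n_pos n E"
  obtains N where "0 \<le> N" and "s_sum n E l + N \<le> 2 * real (num_edges n E)"
    and "s_sum n E l * sqrt (s_sum n E l) \<le> sqrt l * (6 * real (num_triangles n E) + N * sqrt N)"
proof -
  let ?ev = "\<lambda>i. adj_eigs n E ! i"
  have "sorted_wrt (\<ge>) (adj_eigs n E)" by (simp add: adj_eigs_def sorted_wrt_rev)
  then have pos: "0 < ?ev i" if "i < l" for i
    using sorted_desc_nth_pos l that unfolding n_pos_def by fastforce
  have "l \<le> n" using l length_filter_le[of _ "adj_eigs n E"] adj_eigs_power_sum(1)[OF sg]
    unfolding n_pos_def by (metis le_trans)
  then obtain N where N: "0 \<le> N" "s_sum n E l + N \<le> (\<Sum>i<n. (?ev i)\<^sup>2)"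
    and cubes: "(\<Sum>i<l. ?ev i ^ 3) \<le> (\<Sum>i<n. ?ev i ^ 3) + N * sqrt N"
    using sum_prefix_cubes_le[of l n ?ev] pos unfolding s_sum_def by (metis less_imp_le)
  have squares: "(\<Sum>i<n. (?ev i)\<^sup>2) \<le> 2 * real (num_edges n E)"
    using mat_trace_adj_mat_sq_le adj_eigs_power_sum(2)[OF sg] by metis
  have "s_sum n E l * sqrt (s_sum n E l) \<le> sqrt l * (\<Sum>i<l. ?ev i ^ 3)"
    unfolding s_sum_def using pos by (intro sum_squares_three_halves_le less_imp_le)
  also have "\<dots> \<le> sqrt l * (6 * real (num_triangles n E) + N * sqrt N)"
    using cubes mat_trace_adj_mat_cube_le[OF sg] adj_eigs_power_sum(2)[OF sg, of 3]
    by (intro mult_left_mono) auto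
  finally have "s_sum n E l * sqrt (s_sum n E l)
      \<le> sqrt l * (6 * real (num_triangles n E) + N * sqrt N)" .
  with N squares show ?thesis by (intro that[of N]) auto
qed

theorem theorem1p4:
  fixes n :: nat and E :: "nat \<Rightarrow> nat \<Rightarrow> bool"
    and \<omega> k :: nat and \<epsilon> c :: real
  assumes "simple_graph n E"
    and "\<omega> \<ge> 3" and "\<epsilon> > 0" and "c > 0" and "k \<ge> 1"
    and "clique_number n E = \<omega>"
    and "real (num_triangles n E) \<le> c * real (num_edges n E) powr (1.5 - \<epsilon>)"
    and "real (num_edges n E) \<ge> (2.2 * c * real \<omega> ^ (2 * k)) powr (1 / \<epsilon>)"
  shows "Lambda n E (min (n_pos n E) \<omega>)
           < 2 * (root 3 (real \<omega>) / (1 + root 3 (real \<omega>)) + 1 / real \<omega> ^ k)"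
proof -
  define l where "l = min (n_pos n E) \<omega>"
  define m where "m = real (num_edges n E)"
  define t where "t = real (num_triangles n E)"
  define w where "w = real \<omega>"
  obtain N where N: "0 \<le> N" "s_sum n E l + N \<le> 2 * m"
    and cubes: "s_sum n E l * sqrt (s_sum n E l) \<le> sqrt l * (6 * t + N * sqrt N)"
    using top_eigenvalues_cube_bound[OF assms(1), of l] unfolding l_def m_def t_def by auto
  have B: "0 < 2.2 * c * w ^ (2 * k)" unfolding w_def using assms(2,4) by simp
  then have m: "0 < m" unfolding m_def w_def using assms(8) by (smt (verit) powr_gt_zero)
  have "t \<le> c * (m * sqrt m) / (2.2 * c * w ^ (2 * k))"
    using assms(3,4,7,8) B unfolding t_def m_def w_def by (intro le_of_powr_threshold) auto
  then have T: "6 * t \<le> (6 / 2.2) * (m * sqrt m) / w ^ (2 * k)"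
    using assms(4) by (simp add: field_simps)
  have "sqrt l * (6 * t + N * sqrt N) \<le> sqrt w * (6 * t + N * sqrt N)"
    using N(1) unfolding l_def w_def t_def by (intro mult_right_mono) auto
  with cubes have "s_sum n E l * sqrt (s_sum n E l) \<le> sqrt w * (6 * t + N * sqrt N)" by linarith
  moreover have "0 \<le> s_sum n E l" unfolding s_sum_def by (simp add: sum_nonneg)
  moreover have "3 \<le> w" unfolding w_def using assms(2) by simp
  ultimately have "s_sum n E l / m < 2 * (root 3 w / (1 + root 3 w) + 1 / w ^ k)"
    using ratio_bound_from_cube_sums[OF _ N(1) m N(2) _ T _ assms(5)] by blast
  then show ?thesis unfolding Lambda_def l_def m_def w_def .
qed

end
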